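(* Let $S$ be a pair of pants and $\pi$ a convex projective structure on $S$, with Goldman internal parameters $s,t>0$ and Fock–Goncharov coordinates $\tau_{111}(T_\pm)$, $\sigma_1(B_j),\sigma_2(B_j)$ (as defined in the context). Then $$s=\exp\Big(\tfrac16\big(\sigma_1(B_1)+\sigma_1(B_2)+\sigma_1(B_3)-\sigma_2(B_1)-\sigma_2(B_2)-\sigma_2(B_3)\big)\Big)$$ and $$t=e^{-\tau_{111}(T_+)}\big(e^{-\sigma_2(B_2)}+1\big)\big(e^{-\sigma_2(B_3)}+1\big)\big(e^{\sigma_1(B_3)}+1\big)^{-1}.$$
   Context: $S$ is a compact oriented pair of pants with boundary components $A_1,A_2,A_3$, each oriented opposite to the boundary orientation (and regarded as conjugacy classes in $\pi_1(S)$). A convex projective structure $\pi$ has a developing map $\widetilde S\to\mathbb{RP}^2$ (homeomorphism onto a convex domain) equivariant under a monodromy $\rho_\pi\colon\pi_1(S)\to\mathrm{SL}_3(\mathbb{R})$. The eigenvalues of $\rho_\pi(A_i)$ are real with $0<\lambda_i<\mu_i<\nu_i$; set $\tau_i=\mu_i+\nu_i$. The unstable flag of $\rho_\pi(A_i)$ is: line = $\lambda_i$-eigenline, plane = span of the $\lambda_i$- and $\mu_i$-eigenlines. Identify the interior of $S$ with $S^2-\{p_1,p_2,p_3\}$, $p_i$ corresponding to $A_i$, decomposed into ideal triangles $T_+,T_-$ glued along disjoint lines $B_1,B_2,B_3$, where $B_i$ goes (and is oriented) from $p_{i-1}$ to $p_{i+1}$ (indices mod 3), and $p_1,p_2,p_3$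 occur clockwise around $T_+$ (counterclockwise around $T_-$). Goldman's internal parameters: after isotopy, the developing map sends each lift of $T_\pm$ to a geometric triangle in $\mathbb{RP}^2$ minus its vertices, each vertex being the repelling fixed point (the $\lambda_i$-eigenline) of $\rho_\pi$ of a conjugate of some $A_i$. Choose a lift $\widetilde T_+$ and let $\widetilde T_1,\widetilde T_2,\widetilde T_3$ be the lifts of $T_-$ adjacent to it along the sides lifting $B_1,B_2,B_3$; normalize so that the vertices of $\mathrm{dev}(\widetilde T_+)$ fixed by $\rho_\pi(A_1),\rho_\pi(A_2),\rho_\pi(A_3)$ are $[1,0,0],[0,1,0],[0,0,1]$. Then the remaining vertices of $\mathrm{dev}(\widetilde T_1),\mathrm{dev}(\widetilde T_2),\mathrm{dev}(\widetilde T_3)$ are $[-1,b_1,c_1],[a_2,-1,c_2],[a_3,b_3,-1]$ with $a_i,b_i,c_i>0$. Define $t=a_2b_3/a_3$, and $s>0$ as the unique positive solution of $b_3c_2=1+\tau_1\sqrt{\lambda_1\lambda_3/\lambda_2}\,s+(\lambda_3/\lambda_2)s^2$ (equivalently of $a_3c_1=1+\tau_2\sqrt{\lambda_1\lambda_2/\lambda_3}\,s+(\lambda_1/\lambda_3)s^2$, or of $a_2b_1=1+\tau_3\sqrt{\lambda_2\lambda_3/\lambda_1}\,s+(\lambda_2/\lambda_1)s^2$). Fock–Goncharov coordinates: to each vertex of a lift of $T_\pm$, fixed by a conjugate $gA_jg^{-1}$, assign the unstable flag of $\rho_\pi(gA_jg^{-1})$. For a flag $F$, $f^{(a)}$ is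 any nonzero element of $\Lambda^aF^{(a)}$; degree-3 wedges are identified with numbers via a volume form. If $\widetilde T_+$ has vertex flags $F_1,F_2,F_3$ (vertices fixed by conjugates of $A_1,A_2,A_3$, clockwise in this order), $\tau_{111}(T_+)=\log\Big(\frac{f_1^{(2)}\wedge f_2^{(1)}}{f_2^{(1)}\wedge f_3^{(2)}}\frac{f_1^{(1)}\wedge f_3^{(2)}}{f_1^{(1)}\wedge f_2^{(2)}}\frac{f_2^{(2)}\wedge f_3^{(1)}}{f_1^{(2)}\wedge f_3^{(1)}}\Big)$; similarly, for $\widetilde T_-$ with vertex flags $F_1',F_2',F_3'$ (counterclockwise in this order), $\tau_{111}(T_-)=\log\Big(\frac{f_1'^{(2)}\wedge f_3'^{(1)}}{f_2'^{(2)}\wedge f_3'^{(1)}}\frac{f_1'^{(1)}\wedge f_2'^{(2)}}{f_1'^{(1)}\wedge f_3'^{(2)}}\frac{f_2'^{(1)}\wedge f_3'^{(2)}}{f_1'^{(2)}\wedge f_2'^{(1)}}\Big)$. For a lift $\widetilde B_i$ with adjacent lifts $\widetilde T_\pm$, let $F_{i+1},F_{i-1}$ be the flags at its positive and negative endpoints, $F_i$ the flag at the third vertex of $\widetilde T_+$, $F_i'$ that at the third vertex of $\widetilde T_-$; then $\sigma_1(B_i)=\log\Big(-\frac{f_{i+1}^{(1)}\wedge f_{i-1}^{(1)}\wedge f_i^{(1)}}{f_{i+1}^{(1)}\wedge f_{i-1}^{(1)}\wedge f_i'^{(1)}}\frac{f_{i-1}^{(2)}\wedge f_i'^{(1)}}{f_{i-1}^{(2)}\wedge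 f_i^{(1)}}\Big)$ and $\sigma_2(B_i)=\log\Big(-\frac{f_{i+1}^{(1)}\wedge f_{i-1}^{(1)}\wedge f_i'^{(1)}}{f_{i+1}^{(1)}\wedge f_{i-1}^{(1)}\wedge f_i^{(1)}}\frac{f_{i+1}^{(2)}\wedge f_i^{(1)}}{f_{i+1}^{(2)}\wedge f_i'^{(1)}}\Big)$. *)

theory Defs
  imports "HOL-Analysis.Analysis"
begin

(* Volume form on R^3: degree-3 wedges are identified with numbers via det. *)
definition vol3 :: "real^3 \<Rightarrow> real^3 \<Rightarrow> real^3 \<Rightarrow> real" where
  "vol3 u v w = det (vector [u, v, w] :: real^3^3)"

(* A flag (line, plane) in R^3, represented by (x, p, q): the line is spanned by x,
   the plane by p and q.  f^(1) = x, f^(2) = p \<and> q. *)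
type_synonym flag = "(real^3) \<times> (real^3) \<times> (real^3)"

definition fl :: "flag \<Rightarrow> real^3" where "fl F = fst F"

(* f^(2) \<and> x  (= x \<and> f^(2), degree 2*1 is even) *)
definition w2 :: "flag \<Rightarrow> real^3 \<Rightarrow> real" where
  "w2 F x = vol3 x (fst (snd F)) (snd (snd F))"

definition ee1 :: "real^3" where "ee1 = vector [1, 0, 0]"
definition ee2 :: "real^3" where "ee2 = vector [0, 1, 0]"
definition ee3 :: "real^3" where "ee3 = vector [0, 0, 1]"

(* Hence the unstable flag of A is
   (line x, plane span{x,y}) = (x, x, y). *)
definition unstable_data ::
  "real^3^3 \<Rightarrow> real^3 \<Rightarrow> real^3 \<Rightarrow> real \<Rightarrow> real \<Rightarrow> real \<Rightarrow> bool" where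
  "unstable_data A x y l m n \<longleftrightarrow>
     0 < l \<and> l < m \<and> m < n \<and> x \<noteq> 0 \<and> y \<noteq> 0 \<and>
     A *v x = l *\<^sub>R x \<and> A *v y = m *\<^sub>R y \<and> (\<exists>z. z \<noteq> 0 \<and> A *v z = n *\<^sub>R z)"

(* Goldman's normalized configuration of a convex projective structure on the pair of pants:
   A1 A2 A3 are rho(A_1), rho(A_2), rho(A_3) for the representatives fixing the vertices
   [1,0,0],[0,1,0],[0,0,1] of dev(T_+); v1 = [-1,b1,c1], v2 = [a2,-1,c2], v3 = [a3,b3,-1]
   are the third vertices of dev(T_1), dev(T_2), dev(T_3).  The deck transformation A_i
   carries the T_- lift adjacent to T_+ on one side of vertex p_i to the one on the
   other side (as triangles, i.e. with positive scalars):
     A1: T_2 -> T_3,  A2: T_3 -> T_1,  A3: T_1 -> T_2,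
   and the fundamental group relation is A3 A2 A1 = 1. *)
definition goldman_pants ::
  "real^3^3 \<Rightarrow> real^3^3 \<Rightarrow> real^3^3 \<Rightarrow> real \<Rightarrow> real \<Rightarrow> real \<Rightarrow> real \<Rightarrow> real \<Rightarrow> real \<Rightarrow> bool" where
  "goldman_pants A1 A2 A3 a2 a3 b1 b3 c1 c2 \<longleftrightarrow>
     (let v1 = vector [-1, b1, c1] :: real^3;
          v2 = vector [a2, -1, c2] :: real^3;
          v3 = vector [a3, b3, -1] :: real^3 in
     0 < a2 \<and> 0 < a3 \<and> 0 < b1 \<and> 0 < b3 \<and> 0 < c1 \<and> 0 < c2 \<and>
     det A1 = 1 \<and> det A2 = 1 \<and> det A3 = 1 \<and>
     A3 ** A2 ** A1 = mat 1 \<and>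
     (\<exists>l r k. 0 < l \<and> 0 < r \<and> 0 < k \<and>
        A1 *v ee1 = l *\<^sub>R ee1 \<and> A1 *v v2 = r *\<^sub>R ee2 \<and> A1 *v ee3 = k *\<^sub>R v3) \<and>
     (\<exists>l r k. 0 < l \<and> 0 < r \<and> 0 < k \<and>
        A2 *v ee2 = l *\<^sub>R ee2 \<and> A2 *v v3 = r *\<^sub>R ee3 \<and> A2 *v ee1 = k *\<^sub>R v1) \<and>
     (\<exists>l r k. 0 < l \<and> 0 < r \<and> 0 < k \<and>
        A3 *v ee3 = l *\<^sub>R ee3 \<and> A3 *v v1 = r *\<^sub>R ee1 \<and> A3 *v ee2 = k *\<^sub>R v2))"

(* Fock--Goncharov triple ratio of T_+ with vertex flags F1 F2 F3 (clockwise). *)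
definition tau111_plus :: "flag \<Rightarrow> flag \<Rightarrow> flag \<Rightarrow> real" where
  "tau111_plus F1 F2 F3 =
     ln ((w2 F1 (fl F2) / w2 F3 (fl F2)) * (w2 F3 (fl F1) / w2 F2 (fl F1))
         * (w2 F2 (fl F3) / w2 F1 (fl F3)))"

(* Edge coordinates of an edge with flags Fp (positive endpoint), Fm (negative endpoint),
   F (third vertex of T_+) and line f' of the third vertex of T_- (its plane is not used). *)
definition sigma1 :: "flag \<Rightarrow> flag \<Rightarrow> flag \<Rightarrow> real^3 \<Rightarrow> real" where
  "sigma1 Fp Fm F f' =
     ln (- (vol3 (fl Fp) (fl Fm) (fl F) / vol3 (fl Fp) (fl Fm) f')
         * (w2 Fm f' / w2 Fm (fl F)))"

definition sigma2 :: "flag \<Rightarrow> flag \<Rightarrow> flag \<Rightarrow> real^3 \<Rightarrow> real" where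
  "sigma2 Fp Fm F f' =
     ln (- (vol3 (fl Fp) (fl Fm) f' / vol3 (fl Fp) (fl Fm) (fl F))
         * (w2 Fp (fl F) / w2 Fp f'))"

end

theory Submission
  imports Defs
begin

text \<open>
  In Goldman's normalisation \<open>\<rho>(A\<^sub>i)\<close> fixes the vertex \<open>e\<^sub>i\<close> of \<open>dev(T\<^sub>+)\<close>, sends the
  third vertex \<open>v\<close> of one adjacent lift of \<open>T\<^sub>-\<close> to \<open>r e\<^sub>j\<close> and sends \<open>e\<^sub>h\<close> to \<open>k w\<close>, where
  \<open>w\<close> is the third vertex of the other one. This pins the matrix down in terms of \<open>\<lambda>, r, k\<close>;
  the eigenvalues \<open>\<mu>, \<nu>\<close> of its block on \<open>e\<^sub>j, e\<^sub>h\<close> then satisfy \<open>r k = \<mu> \<nu>\<close> and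
  \<open>v\<^sub>h w\<^sub>j k = k + \<mu> + \<nu> + r\<close>, and the \<open>\<mu>\<close>-eigenvector, hence the unstable flag, satisfies
  \<open>v\<^sub>h k y\<^sub>j = -(k + \<mu>) y\<^sub>h\<close>. So every Fock--Goncharov coordinate is a ratio of the
  \<open>k\<^sub>i, \<mu>\<^sub>i, \<nu>\<^sub>i\<close>: \<open>\<sigma>\<^sub>1 = log (\<mu>/k)\<close>, \<open>\<sigma>\<^sub>2 = log (k/\<nu>)\<close> and
  \<open>\<tau>\<^sub>1\<^sub>1\<^sub>1(T\<^sub>+) = log \<Prod> v\<^sub>h k/(k + \<mu>)\<close>. The quadratic defining \<open>s\<close> has the root
  \<open>s k\<^sub>1 \<surd>(\<lambda>\<^sub>1\<lambda>\<^sub>3/\<lambda>\<^sub>2) = 1\<close>, and \<open>A\<^sub>3A\<^sub>2A\<^sub>1 = 1\<close> applied to \<open>e\<^sub>3\<close> and \<open>v\<^sub>2\<close> turns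
  this into \<open>s\<^sup>6 = \<Prod> \<mu>\<^sub>i\<nu>\<^sub>i/k\<^sub>i\<^sup>2\<close>; the formula for \<open>t\<close> follows from
  \<open>(k + \<mu>)(k + \<nu>) = v\<^sub>h w\<^sub>j k\<^sup>2\<close>.
\<close>

text \<open>The three vertex moves differ by a cyclic relabelling of the coordinates, which
  preserves determinants; \<open>cyclic3\<close> lets one lemma cover all three.\<close>

definition cyclic3 :: "3 \<Rightarrow> 3 \<Rightarrow> 3 \<Rightarrow> bool" where
  "cyclic3 i j h \<longleftrightarrow> (i, j, h) \<in> {(1, 2, 3), (2, 3, 1), (3, 1, 2)}"

lemma cyclic3_distinct:
  assumes "cyclic3 i j h" shows "i \<noteq> j" "j \<noteq> h" "h \<noteq> i"
  using assms by (auto simp: cyclic3_def)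

lemma cyclic3_matrix_vector_mult:
  fixes A :: "real^3^3"
  assumes "cyclic3 i j h"
  shows "(A *v x) $ a = A$a$i * x$i + A$a$j * x$j + A$a$h * x$h"
  using assms by (auto simp: cyclic3_def matrix_vector_mult_def sum_3)

lemma cyclic3_vec_eq_iff:
  fixes x y :: "real^3"
  assumes "cyclic3 i j h"
  shows "x = y \<longleftrightarrow> x$i = y$i \<and> x$j = y$j \<and> x$h = y$h"
  using assms by (auto simp: cyclic3_def vec_eq_iff forall_3)

lemma cyclic3_det:
  fixes A :: "real^3^3"
  assumes "cyclic3 i j h"
  shows "det A = A$i$i * (A$j$j * A$h$h - A$j$h * A$h$j) - A$j$i * (A$i$j * A$h$h - A$i$h * A$h$j)
                 + A$h$i * (A$i$j * A$j$h - A$i$h * A$j$j)"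
  using assms by (auto simp: cyclic3_def det_3 algebra_simps)

lemma cyclic3_vol3_axis:
  fixes x y :: "real^3"
  assumes "cyclic3 i j h"
  shows "vol3 x (axis i 1) y = x$h * y$j - x$j * y$h"
    and "vol3 (axis j 1) (axis h 1) x = x$i"
  using assms by (auto simp: cyclic3_def vol3_def det_3 axis_def)

lemma ee_axis: "ee1 = axis 1 1" "ee2 = axis 2 1" "ee3 = axis 3 1"
  by (simp_all add: ee1_def ee2_def ee3_def vec_eq_iff forall_3 axis_def)

lemma eigenvalue_2x2_char_poly:
  fixes a b c d x p q :: real
  assumes row1: "a*p + b*q = x*p" and row2: "c*p + d*q = x*q" and nonzero: "p \<noteq> 0 \<or> q \<noteq> 0"
  shows "x^2 - (a + d)*x + (a*d - b*c) = 0"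
proof -
  let ?\<chi> = "(a - x)*(d - x) - b*c"
  have "?\<chi> * p = (d - x)*(a*p + b*q - x*p) - b*(c*p + d*q - x*q)"
   and "?\<chi> * q = (a - x)*(c*p + d*q - x*q) - c*(a*p + b*q - x*p)"
    by (simp_all add: algebra_simps)
  with row1 row2 nonzero have "?\<chi> = 0" by auto
  then show ?thesis by (simp add: algebra_simps power2_eq_square)
qed

lemma eigenvalues_2x2_sum_prod:
  fixes a b c d m n p q p' q' :: real
  assumes "a*p + b*q = m*p" "c*p + d*q = m*q" "p \<noteq> 0 \<or> q \<noteq> 0"
    and "a*p' + b*q' = n*p'" "c*p' + d*q' = n*q'" "p' \<noteq> 0 \<or> q' \<noteq> 0"
    and "m \<noteq> n"
  shows "a + d = m + n" "a*d - b*c = m*n"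
proof -
  have "m^2 - (a + d)*m + (a*d - b*c) = 0" "n^2 - (a + d)*n + (a*d - b*c) = 0"
    using eigenvalue_2x2_char_poly assms(1-6) by blast+
  then have "(m - n)*(m + n - (a + d)) = 0"
    by (simp add: algebra_simps power2_eq_square)
  with \<open>m \<noteq> n\<close> show "a + d = m + n" by simp
  with \<open>m^2 - (a + d)*m + (a*d - b*c) = 0\<close> show "a*d - b*c = m*n"
    by (simp add: algebra_simps power2_eq_square)
qed

lemma eigenvector_off_axis:
  fixes A :: "real^3^3" and u :: "real^3"
  assumes ijh: "cyclic3 i j h"
    and col: "A$j$i = 0" "A$h$i = 0" "A$i$i = l"
    and eigvec: "A *v u = \<mu> *\<^sub>R u" "u \<noteq> 0" and "\<mu> \<noteq> l"
  shows "A$j$j * u$j + A$j$h * u$h = \<mu> * u$j"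
    and "A$h$j * u$j + A$h$h * u$h = \<mu> * u$h"
    and "u$j \<noteq> 0 \<or> u$h \<noteq> 0"
proof -
  have row: "A$a$i * u$i + A$a$j * u$j + A$a$h * u$h = \<mu> * u$a" for a
    using arg_cong[OF eigvec(1), of "\<lambda>x. x $ a"] cyclic3_matrix_vector_mult[OF ijh] by simp
  show "A$j$j * u$j + A$j$h * u$h = \<mu> * u$j" "A$h$j * u$j + A$h$h * u$h = \<mu> * u$h"
    using row[of j] row[of h] col by simp_all
  show "u$j \<noteq> 0 \<or> u$h \<noteq> 0"
  proof (rule ccontr)
    assume "\<not> ?thesis"
    with row[of i] col have "(l - \<mu>) * u$i = 0" by (simp add: algebra_simps)
    with \<open>\<mu> \<noteq> l\<close> \<open>\<not> ?thesis\<close> have "u = 0"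
      by (simp add: cyclic3_vec_eq_iff[OF ijh])
    with eigvec(2) show False ..
  qed
qed

lemma unstable_data_block:
  fixes A :: "real^3^3"
  assumes ijh: "cyclic3 i j h" and eig: "unstable_data A (axis i 1) y l m n"
  shows "A$j$i = 0" "A$h$i = 0"
    and "A$j$j + A$h$h = m + n" "A$j$j * A$h$h - A$j$h * A$h$j = m * n"
    and "A$h$j * y$j + A$h$h * y$h = m * y$h" "y$j \<noteq> 0 \<or> y$h \<noteq> 0"
    and "det A = l * m * n"
proof -
  obtain z where z: "A *v z = n *\<^sub>R z" "z \<noteq> 0"
    and lmn: "0 < l" "l < m" "m < n"
    and y: "A *v y = m *\<^sub>R y" "y \<noteq> 0"
    and axis: "A *v axis i 1 = l *\<^sub>R axis i 1"
    using eig unfolding unstable_data_def by blast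
  have col: "A$a$i = l * axis i 1 $ a" for a
    using arg_cong[OF axis, of "\<lambda>x. x $ a"] by (simp add: matrix_vector_mult_basis column_def)
  then show Aji: "A$j$i = 0" and Ahi: "A$h$i = 0"
    using cyclic3_distinct[OF ijh] by (simp_all add: axis_def)
  have Aii: "A$i$i = l" using col[of i] by simp
  note y_rows = eigenvector_off_axis[OF ijh Aji Ahi Aii y] and
       z_rows = eigenvector_off_axis[OF ijh Aji Ahi Aii z]
  show "A$h$j * y$j + A$h$h * y$h = m * y$h" "y$j \<noteq> 0 \<or> y$h \<noteq> 0"
    using y_rows lmn by simp_all
  show "A$j$j + A$h$h = m + n" and dt: "A$j$j * A$h$h - A$j$h * A$h$j = m * n"
    using eigenvalues_2x2_sum_prod[OF y_rows z_rows] lmn by simp_all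
  show "det A = l * m * n"
    using cyclic3_det[OF ijh, of A] Aji Ahi Aii dt by simp
qed

lemma goldman_move_relations:
  fixes A :: "real^3^3" and v w y :: "real^3"
  assumes ijh: "cyclic3 i j h"
    and v: "v$j = -1" "0 < v$h" and w: "w$h = -1"
    and Av: "A *v v = r *\<^sub>R axis j 1" and Ah: "A *v axis h 1 = k *\<^sub>R w" and k: "0 < k"
    and det: "det A = 1" and eig: "unstable_data A (axis i 1) y l m n"
  shows "l * r * k = 1" "r * k = m * n" "v$h * w$j * k = k + m + n + r"
    and "v$h * k * y$j = - (k + m) * y$h" "y$h \<noteq> 0"
proof -
  note block = unstable_data_block[OF ijh eig]
  have col_h: "A$a$h = k * w$a" for a
    using arg_cong[OF Ah, of "\<lambda>x. x $ a"] by (simp add: matrix_vector_mult_basis column_def)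
  have row_v: "A$a$i * v$i + A$a$j * v$j + A$a$h * v$h = r * axis j 1 $ a" for a
    using arg_cong[OF Av, of "\<lambda>x. x $ a"] cyclic3_matrix_vector_mult[OF ijh] by simp
  have Ajj: "A$j$j = v$h * w$j * k - r" and Ahj: "A$h$j = - v$h * k"
    using row_v[of j] row_v[of h] block(1,2) v col_h[of j] col_h[of h] w cyclic3_distinct[OF ijh]
    by (auto simp: axis_def algebra_simps)
  have Ahh: "A$h$h = -k" and Ajh: "A$j$h = k * w$j" using col_h w by simp_all
  show rk: "r * k = m * n" using block(4) by (simp add: Ajj Ahj Ahh Ajh algebra_simps)
  show "v$h * w$j * k = k + m + n + r" using block(3) by (simp add: Ajj Ahh)
  show "l * r * k = 1" using block(7) det rk by (simp add: mult.assoc)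
  show y_rel: "v$h * k * y$j = - (k + m) * y$h"
    using block(5) by (simp add: Ahj Ahh algebra_simps)
  show "y$h \<noteq> 0"
    using y_rel block(6) v k by auto
qed

lemma w2_axis_flag:
  assumes "cyclic3 i j h"
  shows "w2 (axis i 1, axis i 1, y) x = x$h * y$j - x$j * y$h"
  using cyclic3_vol3_axis[OF assms] by (simp add: w2_def)

lemma divide_eq_divide_if_scaled:
  fixes a b p q c t :: real
  assumes "a * c = p * t" "b * c = q * t" "c \<noteq> 0" "t \<noteq> 0"
  shows "a / b = p / q"
proof -
  have "a = p * (t / c)" "b = q * (t / c)" using assms by (simp_all add: field_simps)
  with assms(3,4) show ?thesis by simp
qed

lemma unstable_flag_ratios:
  fixes v w y :: "real^3"
  assumes ijh: "cyclic3 i j h"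
    and v: "v$j = -1" and w: "w$h = -1"
    and y: "v$h * k * y$j = - (k + m) * y$h" "y$h \<noteq> 0"
    and rk: "r * k = m * n" and tr: "v$h * w$j * k = k + m + n + r"
    and pos: "0 < k" "0 < m" "0 < n"
  defines "F \<equiv> (axis i 1, axis i 1, y)"
  shows "w2 F v / w2 F (axis j 1) = m / k"
    and "w2 F (axis h 1) / w2 F w = k / n"
    and "w2 F (axis j 1) / w2 F (axis h 1) = v$h * k / (k + m)"
proof -
  have w2F: "w2 F x = x$h * y$j - x$j * y$h" for x
    unfolding F_def by (rule w2_axis_flag[OF ijh])
  have axis: "axis h 1 $ j = (0::real)" "axis j 1 $ h = (0::real)"
    using cyclic3_distinct[OF ijh] by (simp_all add: axis_def)
  have vh: "v$h \<noteq> 0" using y pos by auto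
  have "w2 F v * k = v$h * k * y$j + k * y$h" by (simp add: w2F v algebra_simps)
  also have "\<dots> = m * (- y$h)" unfolding y(1) by (simp add: algebra_simps)
  finally have Fv: "w2 F v * k = m * (- y$h)" .
  have Fj: "w2 F (axis j 1) * k = k * (- y$h)" by (simp add: w2F axis)
  show "w2 F v / w2 F (axis j 1) = m / k"
    using divide_eq_divide_if_scaled[OF Fv Fj] pos y(2) by simp
  have "w2 F (axis h 1) * (v$h * k) = v$h * k * y$j" by (simp add: w2F axis algebra_simps)
  also have "\<dots> = (k + m) * (- y$h)" unfolding y(1) by (simp add: algebra_simps)
  finally have Fh: "w2 F (axis h 1) * (v$h * k) = (k + m) * (- y$h)" .
  have Fj': "w2 F (axis j 1) * (v$h * k) = (v$h * k) * (- y$h)" by (simp add: w2F axis)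
  show "w2 F (axis j 1) / w2 F (axis h 1) = v$h * k / (k + m)"
    using divide_eq_divide_if_scaled[OF Fj' Fh] vh pos y(2) by simp
  have "w2 F w * (v$h * k) = - (v$h * k * y$j) - (v$h * w$j * k) * y$h"
    by (simp add: w2F w algebra_simps)
  also have "\<dots> = (n + r) * (- y$h)" unfolding y(1) tr by (simp add: algebra_simps)
  finally have Fw: "w2 F w * (v$h * k) = (n + r) * (- y$h)" .
  have "w2 F (axis h 1) / w2 F w = (k + m) / (n + r)"
    using divide_eq_divide_if_scaled[OF Fh Fw] vh pos y(2) by simp
  also have "\<dots> = k / n"
  proof -
    have "0 < r * k" using rk pos by simp
    then have "0 < r" using pos(1) by (simp add: zero_less_mult_iff)
    moreover have "(k + m) * n = k * (n + r)" using rk by (simp add: algebra_simps)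
    ultimately show ?thesis using pos by (simp add: frac_eq_eq)
  qed
  finally show "w2 F (axis h 1) / w2 F w = k / n" .
qed

lemma goldman_move:
  fixes A :: "real^3^3" and v w y :: "real^3"
  assumes ijh: "cyclic3 i j h"
    and v: "v$j = -1" "0 < v$h" and w: "w$h = -1"
    and Av: "A *v v = r *\<^sub>R axis j 1" and Ah: "A *v axis h 1 = k *\<^sub>R w" and k: "0 < k"
    and det: "det A = 1" and eig: "unstable_data A (axis i 1) y l m n"
  defines "F \<equiv> (axis i 1, axis i 1, y)"
  shows "l * r * k = 1" "r * k = m * n" "v$h * w$j * k = k + m + n + r"
    and "w2 F v / w2 F (axis j 1) = m / k"
    and "w2 F (axis h 1) / w2 F w = k / n"
    and "w2 F (axis j 1) / w2 F (axis h 1) = v$h * k / (k + m)"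
proof -
  note rel = goldman_move_relations[OF assms(1-9)]
  have "0 < m" "0 < n" using eig unfolding unstable_data_def by auto
  note ratios = unstable_flag_ratios[OF ijh v(1) w rel(4,5,2,3) k this]
  show "l * r * k = 1" "r * k = m * n" "v$h * w$j * k = k + m + n + r" using rel by simp_all
  show "w2 F v / w2 F (axis j 1) = m / k" "w2 F (axis h 1) / w2 F w = k / n"
    "w2 F (axis j 1) / w2 F (axis h 1) = v$h * k / (k + m)"
    using ratios unfolding F_def by simp_all
qed

lemma sigma1_axis_flags:
  assumes ijh: "cyclic3 i j h" and v: "v$i = -1"
  shows "sigma1 (axis j 1, axis j 1, yj) (axis h 1, axis h 1, yh) (axis i 1, axis i 1, yi) v
           = ln (w2 (axis h 1, axis h 1, yh) v / w2 (axis h 1, axis h 1, yh) (axis i 1))"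
  using cyclic3_vol3_axis(2)[OF ijh] v by (simp add: sigma1_def fl_def)

lemma sigma2_axis_flags:
  assumes ijh: "cyclic3 i j h" and v: "v$i = -1"
  shows "sigma2 (axis j 1, axis j 1, yj) (axis h 1, axis h 1, yh) (axis i 1, axis i 1, yi) v
           = ln (w2 (axis j 1, axis j 1, yj) (axis i 1) / w2 (axis j 1, axis j 1, yj) v)"
  using cyclic3_vol3_axis(2)[OF ijh] v by (simp add: sigma2_def fl_def)

lemma tau111_plus_axis_flags:
  fixes y1 y2 y3 :: "real^3"
  defines "F1 \<equiv> (axis 1 1, axis 1 1, y1)" and "F2 \<equiv> (axis 2 1, axis 2 1, y2)"
    and "F3 \<equiv> (axis 3 1, axis 3 1, y3)"
  shows "tau111_plus F1 F2 F3 = ln ((w2 F1 (axis 2 1) / w2 F1 (axis 3 1))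
           * (w2 F2 (axis 3 1) / w2 F2 (axis 1 1)) * (w2 F3 (axis 1 1) / w2 F3 (axis 2 1)))"
  by (simp add: tau111_plus_def fl_def F1_def F2_def F3_def divide_inverse ac_simps)

lemma matrix_cycle_scalars_prod_eq_one:
  fixes A1 A2 A3 :: "real^3^3"
  assumes "A3 ** A2 ** A1 = mat 1" and "x \<noteq> 0"
    and "A1 *v x = a *\<^sub>R x'" "A2 *v x' = b *\<^sub>R x''" "A3 *v x'' = c *\<^sub>R x"
  shows "a * b * c = 1"
proof -
  have "x = (A3 ** A2 ** A1) *v x" using assms(1) by simp
  also have "\<dots> = (a * b * c) *\<^sub>R x"
    using assms(3-5) by (simp add: matrix_vector_mul_assoc[symmetric] matrix_vector_mult_scaleR)
  finally have "(a * b * c - 1) *\<^sub>R x = 0" by (simp add: algebra_simps)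
  with \<open>x \<noteq> 0\<close> show ?thesis by simp
qed

lemma exp_ln_div_eq_pos_root:
  fixes s x :: real
  assumes "0 < s" "s ^ d = x" "0 < d"
  shows "s = exp (ln x / d)"
proof -
  have "ln x = d * ln s" using assms(1,2) by (auto simp: ln_realpow)
  with assms(1,3) show ?thesis by simp
qed

lemma quadratic_normalization_eq_one:
  fixes l r k m n p q c s :: real
  assumes pos: "0 < l" "0 < r" "0 < k" "0 < m + n" "0 \<le> q * s"
    and lrk: "l * r * k = 1" and trace: "p * k = k + m + n + r"
    and c: "l * c = q^2" and p: "p = 1 + (m + n) * q * s + c * s^2"
  shows "q * s * k = 1"
proof -
  define u where "u = q * s * k"
  have "u^2 = (l * c) * s^2 * k^2" by (simp add: u_def power_mult_distrib flip: c)
  then have "r * u^2 = (l * r * k) * c * s^2 * k" by (simp add: algebra_simps power2_eq_square)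
  then have ru: "r * u^2 = c * s^2 * k" by (simp add: lrk)
  have "p * k = k + (m + n) * u + r * u^2"
    unfolding p ru by (simp add: u_def algebra_simps)
  with trace have "(u - 1) * ((m + n) + r * (u + 1)) = 0"
    by (simp add: algebra_simps power2_eq_square)
  moreover have "0 < (m + n) + r * (u + 1)"
    using pos by (simp add: u_def add_pos_nonneg)
  ultimately show ?thesis by (simp add: u_def)
qed

lemma goldman_s_square:
  fixes l1 l2 l3 r1 r2 k1 k2 k3 m1 n1 b3 c2 s :: real
  assumes pos: "0 < l1" "0 < l2" "0 < l3" "0 < r1" "0 < k1" "0 < m1" "0 < n1" "0 < s"
    and lrk: "l1 * r1 * k1 = 1"
    and trace: "c2 * b3 * k1 = k1 + m1 + n1 + r1"
    and lk: "l1 * k1 = l2 * k3" "l3 * k1 = l2 * k2"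
    and s_def: "b3 * c2 = 1 + (m1 + n1) * sqrt (l1 * l3 / l2) * s + (l3 / l2) * s ^ 2"
  shows "s^2 * (l2 * k2 * k3) = 1"
proof -
  define q where "q = sqrt (l1 * l3 / l2)"
  have q2: "q^2 = l1 * l3 / l2" and q: "0 < q"
    using pos by (simp_all add: q_def)
  have "q * s * k1 = 1"
    by (rule quadratic_normalization_eq_one[OF pos(1,4,5) _ _ lrk _ _ s_def[folded q_def]])
       (use pos q trace in \<open>simp_all add: q2 algebra_simps\<close>)
  then have "(q * s * k1)^2 = 1" by simp
  then have "s^2 * (l1 * l3 / l2 * k1^2) = 1" by (simp add: power_mult_distrib mult_ac flip: q2)
  then have "s^2 * (l1 * k1) * (l3 * k1) = l2" using pos by (simp add: field_simps power2_eq_square)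
  then have "s^2 * (l2 * k3) * (l2 * k2) = l2" by (simp only: lk)
  then have "l2 * (s^2 * (l2 * k2 * k3)) = l2 * 1" by (simp add: mult_ac)
  then show ?thesis using pos by simp
qed

lemma goldman_s_formula:
  fixes l1 l2 l3 r1 r2 r3 k1 k2 k3 m1 m2 m3 n1 n2 n3 b3 c2 s :: real
  assumes pos: "0 < l1" "0 < l2" "0 < l3" "0 < r1" "0 < r2" "0 < k1" "0 < k2" "0 < k3"
      "0 < m1" "0 < m2" "0 < m3" "0 < n1" "0 < n2" "0 < n3" "0 < s"
    and lrk: "l1 * r1 * k1 = 1" "l2 * r2 * k2 = 1" "l3 * r3 * k3 = 1"
    and rk: "r1 * k1 = m1 * n1" "r2 * k2 = m2 * n2" "r3 * k3 = m3 * n3"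
    and trace: "c2 * b3 * k1 = k1 + m1 + n1 + r1"
    and cycle: "k1 * r2 * l3 = 1" "r1 * l2 * k3 = 1"
    and s_def: "b3 * c2 = 1 + (m1 + n1) * sqrt (l1 * l3 / l2) * s + (l3 / l2) * s ^ 2"
  shows "s = exp ((ln (m3 / k3) + ln (m1 / k1) + ln (m2 / k2)
                  - ln (k2 / n2) - ln (k3 / n3) - ln (k1 / n1)) / 6)"
proof -
  have "r1 * (l1 * k1) = r1 * (l2 * k3)" "r2 * (l3 * k1) = r2 * (l2 * k2)"
    using lrk(1,2) cycle by (simp_all add: algebra_simps)
  then have lk: "l1 * k1 = l2 * k3" "l3 * k1 = l2 * k2" using pos by simp_all
  have s2: "s^2 * (l2 * k2 * k3) = 1"
    using goldman_s_square[OF pos(1-4,6,9,12,15) lrk(1) trace lk s_def] .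
  have "(m1 * n1 / k1^2) * (m2 * n2 / k2^2) * (m3 * n3 / k3^2) = 1 / ((l1 * k1) * (l3 * k1) * l2 * k2^2 * k3^2)"
  proof -
    have "(l1 * r1 * k1) * (l2 * r2 * k2) * (l3 * r3 * k3) = 1" using lrk by simp
    then show ?thesis unfolding rk[symmetric] using pos by (simp add: field_simps power2_eq_square)
  qed
  also have "\<dots> = 1 / (l2 * k2 * k3)^3"
    unfolding lk by (simp add: power2_eq_square power3_eq_cube mult_ac)
  also have "\<dots> = (s^2)^3"
  proof -
    have "(s^2 * (l2 * k2 * k3))^3 = 1" using s2 by simp
    then have "(s^2)^3 * (l2 * k2 * k3)^3 = 1" by (simp only: power_mult_distrib)
    then show ?thesis using pos by (simp add: field_simps)
  qed
  finally have s6: "s ^ 6 = (m1 * n1 / k1^2) * (m2 * n2 / k2^2) * (m3 * n3 / k3^2)"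
    by (simp flip: power_mult)
  then have "s = exp (ln ((m1 * n1 / k1^2) * (m2 * n2 / k2^2) * (m3 * n3 / k3^2)) / 6)"
    using exp_ln_div_eq_pos_root[OF \<open>0 < s\<close> s6] by simp
  also have "ln ((m1 * n1 / k1^2) * (m2 * n2 / k2^2) * (m3 * n3 / k3^2))
      = ln (m3 / k3) + ln (m1 / k1) + ln (m2 / k2) - ln (k2 / n2) - ln (k3 / n3) - ln (k1 / n1)"
    using pos by (simp add: ln_mult ln_div power2_eq_square)
  finally show ?thesis .
qed

lemma goldman_t_formula:
  fixes a2 a3 b1 b3 c2 k1 k2 k3 m1 m2 m3 n1 n3 r1 r3 :: real
  assumes pos: "0 < a3" "0 < b1" "0 < c2" "0 < k1" "0 < k2" "0 < k3"
      "0 < m1" "0 < m2" "0 < m3" "0 < n1" "0 < n3"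
    and trace: "c2 * b3 * k1 = k1 + m1 + n1 + r1" "b1 * a2 * k3 = k3 + m3 + n3 + r3"
    and rk: "r1 * k1 = m1 * n1" "r3 * k3 = m3 * n3"
  shows "a2 * b3 / a3 = exp (- ln ((c2 * k1 / (k1 + m1)) * (a3 * k2 / (k2 + m2)) * (b1 * k3 / (k3 + m3))))
           * (exp (- ln (k3 / n3)) + 1) * (exp (- ln (k1 / n1)) + 1) * inverse (exp (ln (m2 / k2)) + 1)"
proof -
  define M1 M2 M3 N1 N3 where "M1 = k1 + m1" "M2 = k2 + m2" "M3 = k3 + m3" "N1 = k1 + n1" "N3 = k3 + n3"
  have MN: "0 < M1" "0 < M2" "0 < M3" "0 < N1" "0 < N3"
    using pos by (simp_all add: M1_M2_M3_N1_N3_def)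
  have MN1: "M1 * N1 = c2 * b3 * k1^2" and MN3: "M3 * N3 = b1 * a2 * k3^2"
    using trace rk by (simp_all add: M1_M2_M3_N1_N3_def algebra_simps power2_eq_square)
  have tau: "exp (- ln ((c2 * k1 / M1) * (a3 * k2 / M2) * (b1 * k3 / M3))) = M1 * M2 * M3 / (c2 * k1 * a3 * k2 * b1 * k3)"
    using pos MN by (simp add: exp_minus)
  have edges: "exp (- ln (k3 / n3)) + 1 = N3 / k3" "exp (- ln (k1 / n1)) + 1 = N1 / k1"
      "inverse (exp (ln (m2 / k2)) + 1) = k2 / M2"
    using pos by (simp_all add: M1_M2_M3_N1_N3_def exp_minus field_simps)
  have "exp (- ln ((c2 * k1 / M1) * (a3 * k2 / M2) * (b1 * k3 / M3)))
           * (exp (- ln (k3 / n3)) + 1) * (exp (- ln (k1 / n1)) + 1) * inverse (exp (ln (m2 / k2)) + 1)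
      = (M1 * N1) * (M3 * N3) / (c2 * a3 * b1 * k1^2 * k3^2)"
    unfolding tau edges using pos MN by (simp add: field_simps power2_eq_square)
  also have "\<dots> = a2 * b3 / a3"
    unfolding MN1 MN3 using pos by (simp add: field_simps power2_eq_square)
  finally show ?thesis by (simp add: M1_M2_M3_N1_N3_def)
qed

theorem proposition2:
  fixes A1 A2 A3 :: "real^3^3"
    and a2 a3 b1 b3 c1 c2 :: real
    and l1 m1 n1 l2 m2 n2 l3 m3 n3 :: real
    and y1 y2 y3 :: "real^3"
    and s :: real
  assumes struct: "goldman_pants A1 A2 A3 a2 a3 b1 b3 c1 c2"
    and eig1: "unstable_data A1 ee1 y1 l1 m1 n1"
    and eig2: "unstable_data A2 ee2 y2 l2 m2 n2"
    and eig3: "unstable_data A3 ee3 y3 l3 m3 n3"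
    and s_pos: "0 < s"
    and s_def: "b3 * c2 = 1 + (m1 + n1) * sqrt (l1 * l3 / l2) * s + (l3 / l2) * s ^ 2"
  shows "let F1 = (ee1, ee1, y1); F2 = (ee2, ee2, y2); F3 = (ee3, ee3, y3);
             v1 = vector [-1, b1, c1] :: real^3;
             v2 = vector [a2, -1, c2] :: real^3;
             v3 = vector [a3, b3, -1] :: real^3;
             s11 = sigma1 F2 F3 F1 v1; s12 = sigma1 F3 F1 F2 v2; s13 = sigma1 F1 F2 F3 v3;
             s21 = sigma2 F2 F3 F1 v1; s22 = sigma2 F3 F1 F2 v2; s23 = sigma2 F1 F2 F3 v3;
             t = a2 * b3 / a3
         in s = exp ((s11 + s12 + s13 - s21 - s22 - s23) / 6) \<and>
            t = exp (- tau111_plus F1 F2 F3) * (exp (- s22) + 1) * (exp (- s23) + 1)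
                  * inverse (exp s13 + 1)"
proof -
  define v1 v2 v3 where "v1 = (vector [-1, b1, c1] :: real^3)"
    and "v2 = (vector [a2, -1, c2] :: real^3)" and "v3 = (vector [a3, b3, -1] :: real^3)"
  note eig = eig1[unfolded ee_axis] eig2[unfolded ee_axis] eig3[unfolded ee_axis]
  have cyc: "cyclic3 1 2 3" "cyclic3 2 3 1" "cyclic3 3 1 2" by (simp_all add: cyclic3_def)
  obtain r1 k1 r2 k2 r3 k3 where
    pos: "0 < a2" "0 < a3" "0 < b1" "0 < b3" "0 < c1" "0 < c2"
      "0 < r1" "0 < k1" "0 < r2" "0 < k2" "0 < r3" "0 < k3"
    and det: "det A1 = 1" "det A2 = 1" "det A3 = 1" and prod: "A3 ** A2 ** A1 = mat 1"
    and A1: "A1 *v v2 = r1 *\<^sub>R axis 2 1" "A1 *v axis 3 1 = k1 *\<^sub>R v3"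
    and A2: "A2 *v v3 = r2 *\<^sub>R axis 3 1" "A2 *v axis 1 1 = k2 *\<^sub>R v1"
    and A3: "A3 *v v1 = r3 *\<^sub>R axis 1 1" "A3 *v axis 2 1 = k3 *\<^sub>R v2"
    using struct unfolding goldman_pants_def Let_def v1_def v2_def v3_def ee_axis by metis
  have comps: "v1$1 = -1" "v1$2 = b1" "v1$3 = c1" "v2$1 = a2" "v2$2 = -1" "v2$3 = c2"
      "v3$1 = a3" "v3$2 = b3" "v3$3 = -1"
    by (simp_all add: v1_def v2_def v3_def)
  have vpos: "0 < v2$3" "0 < v3$1" "0 < v1$2" using comps pos by simp_all
  note M1 = goldman_move[OF cyc(1) comps(5) vpos(1) comps(9) A1 pos(8) det(1) eig(1), unfolded comps]
   and M2 = goldman_move[OF cyc(2) comps(9) vpos(2) comps(1) A2 pos(10) det(2) eig(2), unfolded comps]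
   and M3 = goldman_move[OF cyc(3) comps(1) vpos(3) comps(5) A3 pos(12) det(3) eig(3), unfolded comps]
  have lmn: "0 < l1" "0 < l2" "0 < l3" "0 < m1" "0 < m2" "0 < m3" "0 < n1" "0 < n2" "0 < n3"
    and fixed: "A2 *v axis 2 1 = l2 *\<^sub>R axis 2 1" "A3 *v axis 3 1 = l3 *\<^sub>R axis 3 1"
    using eig unfolding unstable_data_def by auto
  have "v2 \<noteq> 0" using comps(5) by force
  then have cycle: "k1 * r2 * l3 = 1" "r1 * l2 * k3 = 1"
    using matrix_cycle_scalars_prod_eq_one[OF prod _ A1(2) A2(1) fixed(2)]
      matrix_cycle_scalars_prod_eq_one[OF prod _ A1(1) fixed(1) A3(2)] by auto
  define F1 F2 F3 :: flag where "F1 = (axis 1 1, axis 1 1, y1)"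
    and "F2 = (axis 2 1, axis 2 1, y2)" and "F3 = (axis 3 1, axis 3 1, y3)"
  have coordinates:
    "sigma1 F2 F3 F1 v1 = ln (m3 / k3)" "sigma1 F3 F1 F2 v2 = ln (m1 / k1)"
    "sigma1 F1 F2 F3 v3 = ln (m2 / k2)" "sigma2 F2 F3 F1 v1 = ln (k2 / n2)"
    "sigma2 F3 F1 F2 v2 = ln (k3 / n3)" "sigma2 F1 F2 F3 v3 = ln (k1 / n1)"
    "tau111_plus F1 F2 F3 = ln ((c2 * k1 / (k1 + m1)) * (a3 * k2 / (k2 + m2)) * (b1 * k3 / (k3 + m3)))"
    unfolding F1_def F2_def F3_def sigma1_axis_flags[OF cyc(1) comps(1)] sigma1_axis_flags[OF cyc(2) comps(5)]
      sigma1_axis_flags[OF cyc(3) comps(9)] sigma2_axis_flags[OF cyc(1) comps(1)]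
      sigma2_axis_flags[OF cyc(2) comps(5)] sigma2_axis_flags[OF cyc(3) comps(9)]
      tau111_plus_axis_flags M1(4-6) M2(4-6) M3(4-6)
    by (rule refl)+
  note goldman_s_formula[OF lmn(1-3) pos(7,9,8,10,12) lmn(4-9) s_pos M1(1) M2(1) M3(1)
      M1(2) M2(2) M3(2) M1(3) cycle s_def]
  moreover note goldman_t_formula[OF pos(2,3,6,8,10,12) lmn(4-7,9) M1(3) M3(3) M1(2) M3(2)]
  ultimately show ?thesis
    unfolding Let_def ee_axis v1_def[symmetric] v2_def[symmetric] v3_def[symmetric]
      F1_def[symmetric] F2_def[symmetric] F3_def[symmetric] coordinates
    by simp
qed

end
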